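(* For $x>0$ let $\mathcal{S}[x]=\{v\in\mathbb{C}:\ \operatorname{Im}v\in[-x,x]\}$. Say a function $g$ is ANZC in $\mathcal{S}[x]$ if it is analytic and nonzero in $\mathcal{S}[x]$ and tends to constant values as $\operatorname{Re}v\to\pm\infty$ in $\mathcal{S}[x]$. Let $M\ge1$ and let $v_0,v_1,\dots,v_M\ge0$ be real numbers with $v_0>v_j$ for $j\ge1$. Suppose functions $g_0,\dots,g_M$ satisfy $$g_0(v-iv_0)\,g_0(v+iv_0)=\prod_{j=1}^{M}g_j(v-iv_j)\,g_j(v+iv_j),$$ and that for each $j\ge0$, $g_j$ is ANZC in $\mathcal{S}[w_j]$ for some $w_j\ge v_j$. Then there is a constant $C$ such that for real $v$ $$\ln g_0(v)=\sum_{j=1}^{M}\int_{-\infty}^{\infty}R_j(v-v')\ln g_j(v')\,dv'+C,\qquad R_j(v)=\frac{1}{2\pi}\int_{-\infty}^{\infty}e^{ikv}\frac{\cosh v_jk}{\cosh v_0k}\,dk,$$ where $C$ is determined by the asymptotic values of both sides. *)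

theory Defs
  imports "HOL-Analysis.Analysis"
begin

definition strip :: "real \<Rightarrow> complex set" where
  "strip x = {v. \<bar>Im v\<bar> \<le> x}"

definition ANZC :: "(complex \<Rightarrow> complex) \<Rightarrow> real \<Rightarrow> bool" where
  "ANZC g x \<longleftrightarrow>
     g analytic_on strip x \<and>
     (\<forall>v\<in>strip x. g v \<noteq> 0) \<and>
     (\<exists>c. c \<noteq> 0 \<and> (g \<longlongrightarrow> c) (inf (filtercomap Re at_top) (principal (strip x)))) \<and>
     (\<exists>c. c \<noteq> 0 \<and> (g \<longlongrightarrow> c) (inf (filtercomap Re at_bot) (principal (strip x))))"

definition kernel :: "real \<Rightarrow> real \<Rightarrow> real \<Rightarrow> complex" where
  "kernel a b v = complex_of_real (1 / (2 * pi)) *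
     integral\<^sup>L lborel (\<lambda>k::real. exp (\<i> * complex_of_real (k * v)) *
                                     complex_of_real (cosh (b * k) / cosh (a * k)))"

end

(*
  Let a = v0 and P z = sech_kernel a z = 1 / (4 a cosh (pi z / (2 a))).  A residue computation gives
  the Fourier transform of exp (beta k) / cosh (a k), whence R_j v = P (v - i vj) + P (v + i vj).
  Each g_j has a bounded holomorphic logarithm Lambda_j on its strip extending L_j: the strip is
  simply connected and g_j stays close to nonzero constants near both ends.  Shifting the line of
  integration turns the convolution of R_j with Lambda_j into the convolution of P with
  Lambda_j (t - i vj) + Lambda_j (t + i vj).  By the functional equation, the sum of these over j
  differs from Lambda_0 (t - i a) + Lambda_0 (t + i a) by a continuous function with values in
  2 pi i Z, hence by a constant D.  Finally, integrating P (v + i a - w) Lambda (w) around the strip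
  |Im w| <= a, where the only pole is at w = v, gives the Poisson formula
  int P (v - t) (Lambda (t - i a) + Lambda (t + i a)) dt = Lambda v for bounded holomorphic Lambda;
  applied to Lambda_0 - D / 2 it yields the theorem with C = D / 2.
*)
theory Submission
  imports Defs "HOL-Complex_Analysis.Complex_Analysis" "HOL-Probability.Sinc_Integral"
begin

section \<open>Integrals over horizontal lines and rectangles\<close>

lemma has_contour_integral_linepath_shift:
  "(f has_contour_integral I) (linepath (a + w) (b + w)) \<longleftrightarrow>
   ((\<lambda>z. f (z + w)) has_contour_integral I) (linepath a b)"
proof -
  have "linepath (a + w) (b + w) x = linepath a b x + w" for x
    by (simp add: linepath_def algebra_simps)
  then show ?thesis unfolding has_contour_integral_linepath by simp
qed

lemma has_contour_integral_horizontal_linepath: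
  assumes "x1 < x2"
  shows "(f has_contour_integral I) (linepath (Complex x1 c) (Complex x2 c)) \<longleftrightarrow>
         ((\<lambda>t. f (Complex t c)) has_integral I) {x1..x2}"
proof -
  have e: "Complex x c = of_real x + \<i> * of_real c" for x by (simp add: Complex_eq)
  have "(f has_contour_integral I) (linepath (Complex x1 c) (Complex x2 c)) \<longleftrightarrow>
        ((\<lambda>z. f (z + \<i> * of_real c)) has_contour_integral I) (linepath (of_real x1) (of_real x2))"
    unfolding e by (rule has_contour_integral_linepath_shift)
  also have "\<dots> \<longleftrightarrow> ((\<lambda>t. f (of_real t + \<i> * of_real c)) has_integral I) {x1..x2}"
    using has_contour_integral_linepath_Reals_iff[of "of_real x1" "of_real x2"] assms by simp
  finally show ?thesis by (simp add: e)
qed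

lemma integrable_exp_neg_abs:
  fixes \<alpha> :: real
  assumes "\<alpha> > 0"
  shows "integrable lborel (\<lambda>t::real. exp (-\<alpha> * \<bar>t\<bar>))"
proof -
  have pos: "integrable lborel (\<lambda>t::real. indicator {0<..} t *\<^sub>R exp (-(t * \<alpha>)))"
    using integrable_I0i_exp_mscale[OF assms] by (simp add: set_integrable_def)
  then have neg: "integrable lborel (\<lambda>t::real. indicator {0<..} (-t) *\<^sub>R exp (-((-t) * \<alpha>)))"
    using lborel_integrable_real_affine_iff[of "-1" "\<lambda>t. indicator {0<..} t *\<^sub>R exp (-(t * \<alpha>))" 0]
    by simp
  have "integrable lborel (\<lambda>t::real. indicator {0<..} t *\<^sub>R exp (-(t * \<alpha>)) +
          indicator {0<..} (-t) *\<^sub>R exp (-((-t) * \<alpha>)) + indicator {0} t)"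
    by (intro Bochner_Integration.integrable_add pos neg) (simp add: integrable_indicator_iff)
  from Bochner_Integration.integrable_cong[THEN iffD1, OF refl _ this] show ?thesis
    by (auto simp: indicator_def abs_if)
qed

lemma integrable_exp_decay:
  fixes f :: "real \<Rightarrow> 'a::{banach, second_countable_topology}"
  assumes "continuous_on UNIV f" and "\<alpha> > 0" and "\<And>t. norm (f t) \<le> B * exp (-\<alpha> * \<bar>t\<bar>)"
  shows "integrable lborel f"
proof (rule Bochner_Integration.integrable_bound)
  show "integrable lborel (\<lambda>t. B * exp (-\<alpha> * \<bar>t\<bar>))"
    using integrable_exp_neg_abs[OF assms(2)] by simp
  show "f \<in> borel_measurable lborel"
    using borel_measurable_continuous_onI[OF assms(1)] by simp
  show "AE t in lborel. norm (f t) \<le> norm (B * exp (-\<alpha> * \<bar>t\<bar>))"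
    using assms(3) by (auto intro: order_trans[OF _ abs_ge_self])
qed

lemma tendsto_integral_symmetric_interval:
  fixes f :: "real \<Rightarrow> 'a::euclidean_space"
  assumes f: "integrable lborel f"
  shows "((\<lambda>T. integral {-T..T} f) \<longlongrightarrow> integral\<^sup>L lborel f) at_top"
proof -
  have "(LINT t|lborel. indicator {-T..T} t *\<^sub>R f t) = integral {-T..T} f" for T
  proof -
    have "set_integrable lborel {-T..T} f"
      unfolding set_integrable_def by (rule integrable_mult_indicator[OF _ f]) simp
    from set_borel_integral_eq_integral(2)[OF this] show ?thesis
      by (simp add: set_lebesgue_integral_def)
  qed
  moreover have "((\<lambda>T. LINT t|lborel. indicator {-T..T} t *\<^sub>R f t) \<longlongrightarrow> integral\<^sup>L lborel f) at_top"
  proof (rule integral_dominated_convergence_at_top[where w = "\<lambda>t. norm (f t)"])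
    show "AE t in lborel. ((\<lambda>T. indicator {-T..T} t *\<^sub>R f t) \<longlongrightarrow> f t) at_top"
    proof (rule AE_I2, rule tendsto_eventually)
      fix t :: real
      show "\<forall>\<^sub>F T in at_top. indicator {-T..T} t *\<^sub>R f t = f t"
        using eventually_ge_at_top[of "\<bar>t\<bar>"] by eventually_elim (auto simp: indicator_def)
    qed
  qed (use f in \<open>auto simp: indicator_def\<close>)
  ultimately show ?thesis by simp
qed

lemma has_contour_integral_rectpath_sides:
  fixes f :: "complex \<Rightarrow> complex"
  assumes x: "x1 < x2" and cont: "continuous_on (path_image (rectpath (Complex x1 c) (Complex x2 d))) f"
  shows "(f has_contour_integral
            integral {x1..x2} (\<lambda>t. f (Complex t c)) - integral {x1..x2} (\<lambda>t. f (Complex t d)) +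
            contour_integral (linepath (Complex x2 c) (Complex x2 d)) f -
            contour_integral (linepath (Complex x1 c) (Complex x1 d)) f)
          (rectpath (Complex x1 c) (Complex x2 d))"
proof -
  define a1 a2 a3 a4 where "a1 = Complex x1 c" and "a2 = Complex x2 c"
    and "a3 = Complex x2 d" and "a4 = Complex x1 d"
  have path: "rectpath a1 a3 = linepath a1 a2 +++ linepath a2 a3 +++ linepath a3 a4 +++ linepath a4 a1"
    by (simp add: rectpath_def Let_def a1_def a2_def a3_def a4_def)
  then have image: "path_image (rectpath a1 a3) =
      closed_segment a1 a2 \<union> closed_segment a2 a3 \<union> closed_segment a3 a4 \<union> closed_segment a4 a1"
    by (simp add: path_image_join Un_assoc)
  have cont_seg: "continuous_on (closed_segment p q) f"
    if "closed_segment p q \<subseteq> path_image (rectpath a1 a3)" for p q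
    using cont that unfolding a1_def a3_def by (rule continuous_on_subset)
  have has_integral: "(f has_contour_integral contour_integral (linepath p q) f) (linepath p q)"
    if "closed_segment p q \<subseteq> path_image (rectpath a1 a3)" for p q
    by (intro has_contour_integral_integral contour_integrable_continuous_linepath cont_seg that)
  have horizontal: "contour_integral (linepath (Complex x1 y) (Complex x2 y)) f =
      integral {x1..x2} (\<lambda>t. f (Complex t y))"
    if "closed_segment (Complex x1 y) (Complex x2 y) \<subseteq> path_image (rectpath a1 a3)" for y
    using has_integral[OF that] x by (simp add: has_contour_integral_horizontal_linepath integral_unique)
  have "(f has_contour_integral
      contour_integral (linepath a1 a2) f + (contour_integral (linepath a2 a3) f +
      (contour_integral (linepath a3 a4) f + contour_integral (linepath a4 a1) f))) (rectpath a1 a3)"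
    unfolding path using has_integral image
    by (intro has_contour_integral_join valid_path_join valid_path_linepath) auto
  moreover have "contour_integral (linepath a3 a4) f = - contour_integral (linepath a4 a3) f"
    "contour_integral (linepath a4 a1) f = - contour_integral (linepath a1 a4) f"
    using cont_seg image by (intro contour_integral_reverse_linepath; auto)+
  moreover have "contour_integral (linepath a1 a2) f = integral {x1..x2} (\<lambda>t. f (Complex t c))"
    "contour_integral (linepath a4 a3) f = integral {x1..x2} (\<lambda>t. f (Complex t d))"
    using horizontal image unfolding a1_def a2_def a3_def a4_def by (auto simp: closed_segment_commute)
  ultimately show ?thesis
    by (simp add: a1_def a2_def a3_def a4_def algebra_simps)
qed

lemma norm_contour_integral_vertical_le:
  fixes f :: "complex \<Rightarrow> complex"
  assumes cd: "c \<le> d" and cont: "continuous_on (closed_segment (Complex x c) (Complex x d)) f"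
    and bnd: "\<And>y. c \<le> y \<Longrightarrow> y \<le> d \<Longrightarrow> norm (f (Complex x y)) \<le> K"
  shows "norm (contour_integral (linepath (Complex x c) (Complex x d)) f) \<le> K * (d - c)"
proof -
  have "norm (contour_integral (linepath (Complex x c) (Complex x d)) f) \<le>
          K * norm (Complex x d - Complex x c)"
  proof (rule has_contour_integral_bound_linepath)
    show "(f has_contour_integral contour_integral (linepath (Complex x c) (Complex x d)) f)
            (linepath (Complex x c) (Complex x d))"
      by (intro has_contour_integral_integral contour_integrable_continuous_linepath cont)
    show "0 \<le> K" using bnd[of c] cd by (auto intro: order_trans[OF norm_ge_zero])
    show "norm (f z) \<le> K" if "z \<in> closed_segment (Complex x c) (Complex x d)" for z
      using that cd bnd[of "Im z"] by (auto simp: closed_segment_same_Re closed_segment_eq_real_ivl complex_eq_iff)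
  qed
  then show ?thesis using cd by (simp add: cmod_def)
qed

lemma eq_if_tendsto_exponentially_close:
  fixes X :: "real \<Rightarrow> 'a::real_normed_vector"
  assumes lim: "(X \<longlongrightarrow> L) at_top"
    and close: "\<forall>\<^sub>F T in at_top. norm (X T - J) \<le> C * exp (-\<alpha> * T)" and \<alpha>: "\<alpha> > 0"
  shows "L = J"
proof -
  have "((\<lambda>T. exp (-\<alpha> * T)) \<longlongrightarrow> 0) at_top"
    using \<alpha> by (intro filterlim_compose[OF exp_at_bot] filterlim_tendsto_neg_mult_at_bot tendsto_const)
       (auto intro: filterlim_ident)
  then have "((\<lambda>T. C * exp (-\<alpha> * T)) \<longlongrightarrow> 0) at_top"
    by (rule tendsto_mult_right_zero)
  with close have "((\<lambda>T. X T - J) \<longlongrightarrow> 0) at_top"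
    by (rule Lim_null_comparison)
  moreover have "((\<lambda>T. X T - J) \<longlongrightarrow> L - J) at_top"
    using lim by (intro tendsto_diff tendsto_const)
  ultimately have "L - J = 0"
    using tendsto_unique[OF trivial_limit_at_top_linorder] by blast
  then show ?thesis by simp
qed

text \<open>Only continuity on \<open>\<Gamma>\<close> is required: singularities strictly inside the strip are
  accounted for by \<open>J\<close>.\<close>

lemma lborel_integral_horizontal_lines_diff:
  fixes f :: "complex \<Rightarrow> complex"
  assumes cd: "c < d" and \<alpha>: "\<alpha> > 0" and R: "0 \<le> R"
  defines "\<Gamma> \<equiv> {z. c \<le> Im z \<and> Im z \<le> d \<and> (Im z = c \<or> Im z = d \<or> R \<le> \<bar>Re z\<bar>)}"
  assumes cont: "continuous_on \<Gamma> f"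
    and decay: "\<And>z. z \<in> \<Gamma> \<Longrightarrow> norm (f z) \<le> B * exp (-\<alpha> * \<bar>Re z\<bar>)"
    and rect: "\<And>T. R < T \<Longrightarrow> (f has_contour_integral J) (rectpath (Complex (-T) c) (Complex T d))"
  shows "integrable lborel (\<lambda>t. f (Complex t c))" "integrable lborel (\<lambda>t. f (Complex t d))"
    "(LINT t|lborel. f (Complex t c)) - (LINT t|lborel. f (Complex t d)) = J"
proof -
  have line: "continuous_on UNIV (\<lambda>t. f (Complex t y))" "norm (f (Complex t y)) \<le> B * exp (-\<alpha> * \<bar>t\<bar>)"
    if "y = c \<or> y = d" for y t
  proof -
    have "continuous_on UNIV (\<lambda>t::real. Complex t y)"
      unfolding Complex_eq by (intro continuous_intros)
    then show "continuous_on UNIV (\<lambda>t. f (Complex t y))"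
      by (rule continuous_on_compose2[OF cont]) (use that cd in \<open>auto simp: \<Gamma>_def\<close>)
    show "norm (f (Complex t y)) \<le> B * exp (-\<alpha> * \<bar>t\<bar>)"
      using decay[of "Complex t y"] that cd by (auto simp: \<Gamma>_def)
  qed
  have int: "integrable lborel (\<lambda>t. f (Complex t y))" if "y = c \<or> y = d" for y
    using integrable_exp_decay[OF line(1)[OF that] \<alpha> line(2)[OF that]] .
  then show "integrable lborel (\<lambda>t. f (Complex t c))" "integrable lborel (\<lambda>t. f (Complex t d))"
    by auto
  define I where "I y T = integral {-T..T} (\<lambda>t. f (Complex t y))" for y T
  have sides: "norm (I c T - I d T - J) \<le> 2 * B * (d - c) * exp (-\<alpha> * T)" if T: "R < T" for T
  proof -
    have image: "path_image (rectpath (Complex (-T) c) (Complex T d)) \<subseteq> \<Gamma>"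
      using T R cd by (auto simp: path_image_rectpath \<Gamma>_def)
    define V where "V x = contour_integral (linepath (Complex x c) (Complex x d)) f" for x
    have J: "J = I c T - I d T + V T - V (-T)"
      using has_contour_integral_rectpath_sides[OF _ continuous_on_subset[OF cont image]] T R
        has_contour_integral_unique[OF rect[OF T]] unfolding I_def V_def by simp
    have V: "norm (V x) \<le> B * exp (-\<alpha> * T) * (d - c)" if "\<bar>x\<bar> = T" for x
      unfolding V_def
    proof (rule norm_contour_integral_vertical_le)
      show "continuous_on (closed_segment (Complex x c) (Complex x d)) f"
        using that T cd
        by (intro continuous_on_subset[OF cont]) (auto simp: \<Gamma>_def closed_segment_same_Re closed_segment_eq_real_ivl)
      show "norm (f (Complex x y)) \<le> B * exp (-\<alpha> * T)" if "c \<le> y" "y \<le> d" for y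
        using decay[of "Complex x y"] that \<open>\<bar>x\<bar> = T\<close> T by (simp add: \<Gamma>_def)
    qed (use cd in simp)
    have "norm (V (-T)) + norm (V T) \<le> 2 * B * (d - c) * exp (-\<alpha> * T)"
      using V[of T] V[of "-T"] T R by (simp add: algebra_simps)
    then show ?thesis
      using norm_triangle_ineq4[of "V (-T)" "V T"] by (simp add: J)
  qed
  have "((\<lambda>T. I c T - I d T) \<longlongrightarrow> (LINT t|lborel. f (Complex t c)) - (LINT t|lborel. f (Complex t d))) at_top"
    unfolding I_def by (intro tendsto_diff tendsto_integral_symmetric_interval int) auto
  moreover have "\<forall>\<^sub>F T in at_top. norm (I c T - I d T - J) \<le> 2 * B * (d - c) * exp (-\<alpha> * T)"
    using eventually_gt_at_top[of R] by eventually_elim (rule sides)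
  ultimately show "(LINT t|lborel. f (Complex t c)) - (LINT t|lborel. f (Complex t d)) = J"
    using \<alpha> by (rule eq_if_tendsto_exponentially_close)
qed

lemma rectpath_integral_simple_pole:
  fixes F D :: "complex \<Rightarrow> complex"
  assumes ab: "Re a < Re b" "Im a < Im b"
    and F: "F holomorphic_on cbox a b" and D: "D holomorphic_on UNIV"
    and z0: "z0 \<in> box a b" "D z0 = 0"
    and D': "(D has_field_derivative D') (at z0)" "D' \<noteq> 0"
    and nz: "\<And>z. z \<in> cbox a b \<Longrightarrow> z \<noteq> z0 \<Longrightarrow> D z \<noteq> 0"
  shows "((\<lambda>z. F z / D z) has_contour_integral (2 * pi * \<i> * F z0 / D')) (rectpath a b)"
proof -
  define G where "G z = (if z = z0 then deriv D z0 else (D z - D z0) / (z - z0))" for z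
  have G: "G holomorphic_on UNIV"
    unfolding G_def by (rule pole_lemma[OF D]) simp
  have Gz0: "G z0 = D'"
    using DERIV_imp_deriv[OF D'(1)] by (simp add: G_def)
  have Gz: "G z = D z / (z - z0)" if "z \<noteq> z0" for z
    using that z0(2) by (simp add: G_def)
  have Gnz: "G z \<noteq> 0" if "z \<in> cbox a b" for z
    using nz[OF that] D'(2) Gz0 Gz by (cases "z = z0") auto
  have hol: "(\<lambda>z. F z / G z) holomorphic_on cbox a b"
    by (intro holomorphic_intros F holomorphic_on_subset[OF G] Gnz) auto
  have pimg: "path_image (rectpath a b) = cbox a b - box a b"
    by (rule path_image_rectpath_cbox_minus_box) (use ab in auto)
  have "((\<lambda>z. F z / G z / (z - z0)) has_contour_integral
          (2 * pi * \<i> * winding_number (rectpath a b) z0 * (F z0 / G z0))) (rectpath a b)"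
  proof (rule Cauchy_integral_formula_weak[where k = "{}"])
    show "continuous_on (cbox a b) (\<lambda>z. F z / G z)"
      using hol by (rule holomorphic_on_imp_continuous_on)
    show "(\<lambda>z. F z / G z) field_differentiable at x" if "x \<in> interior (cbox a b) - {}" for x
      using that holomorphic_on_imp_differentiable_at[OF holomorphic_on_subset[OF hol interior_subset]]
      by auto
    show "z0 \<in> interior (cbox a b) - {}" using z0(1) by (simp add: interior_cbox)
    show "path_image (rectpath a b) \<subseteq> cbox a b - {z0}" using pimg z0(1) by auto
  qed (auto simp: convex_box)
  then have "((\<lambda>z. F z / G z / (z - z0)) has_contour_integral (2 * pi * \<i> * F z0 / D')) (rectpath a b)"
    using winding_number_rectpath[OF z0(1)] Gz0 by simp
  then show ?thesis
  proof (rule has_contour_integral_eq)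
    fix z assume "z \<in> path_image (rectpath a b)"
    then have "z \<noteq> z0" using pimg z0(1) by auto
    then show "F z / G z / (z - z0) = F z / D z" by (simp add: Gz)
  qed
qed

lemma strip_mono: "x \<le> y \<Longrightarrow> strip x \<subseteq> strip y"
  by (auto simp: strip_def)

lemma convex_strip: "convex (strip w)"
proof -
  have "strip w = {z. Im z \<ge> -w} \<inter> {z. Im z \<le> w}"
    by (auto simp: strip_def)
  then show ?thesis by (simp add: convex_Int convex_halfspace_Im_ge convex_halfspace_Im_le)
qed

lemma continuous_on_strip_line:
  assumes "continuous_on (strip w) f" "\<bar>y\<bar> \<le> w"
  shows "continuous_on UNIV (\<lambda>t. f (of_real t + \<i> * of_real y))"
  by (rule continuous_on_compose2[OF assms(1)])
    (use assms(2) in \<open>auto intro!: continuous_intros simp: strip_def\<close>)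

section \<open>The hyperbolic cosine\<close>

lemma Re_cosh: "Re (cosh z) = cosh (Re z) * cos (Im z)"
  by (simp add: cosh_conv_cos Re_cos cosh_def)

lemma Im_cosh: "Im (cosh z) = sinh (Re z) * sin (Im z)"
  by (simp add: cosh_conv_cos Im_cos sinh_def field_simps)

lemma cosh_of_real: "cosh (of_real x :: 'a::{banach, real_normed_field}) = of_real (cosh x)"
  by (simp add: cosh_field_def flip: exp_of_real)

lemma holomorphic_on_cosh [holomorphic_intros]:
  "f holomorphic_on A \<Longrightarrow> (\<lambda>z. cosh (f z)) holomorphic_on A"
  unfolding cosh_field_def by (intro holomorphic_intros) auto

lemma exp_abs_le_2_cosh: "exp \<bar>x\<bar> \<le> 2 * cosh (x::real)"
  by (cases "x \<ge> 0") (simp_all add: cosh_def)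

lemma exp_abs_le_4_abs_sinh:
  assumes "1 \<le> \<bar>x\<bar>"
  shows "exp \<bar>x\<bar> \<le> 4 * \<bar>sinh (x::real)\<bar>"
proof -
  have "exp (- \<bar>x\<bar>) \<le> 1" by simp
  moreover have "2 \<le> exp \<bar>x\<bar>"
    using exp_ge_add_one_self[of "\<bar>x\<bar>"] assms by linarith
  moreover have "2 * \<bar>sinh x\<bar> = exp \<bar>x\<bar> - exp (- \<bar>x\<bar>)"
    by (cases "x \<ge> 0") (simp_all add: sinh_def abs_if field_simps)
  ultimately show ?thesis by linarith
qed

lemma cosh_Re_mult_abs_cos_le_norm_cosh: "cosh (Re z) * \<bar>cos (Im z)\<bar> \<le> norm (cosh z)"
  using abs_Re_le_cmod[of "cosh z"] by (simp add: Re_cosh abs_mult)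

lemma abs_sinh_Re_le_norm_cosh: "\<bar>sinh (Re z)\<bar> \<le> norm (cosh z)"
proof -
  have "Re (cosh z) ^ 2 + Im (cosh z) ^ 2 =
        cosh (Re z) ^ 2 * cos (Im z) ^ 2 + sinh (Re z) ^ 2 * sin (Im z) ^ 2"
    by (simp add: Re_cosh Im_cosh power_mult_distrib)
  also have "\<dots> = sinh (Re z) ^ 2 + cos (Im z) ^ 2"
    unfolding cosh_square_eq sin_squared_eq by (simp add: algebra_simps)
  finally have "sqrt (sinh (Re z) ^ 2) \<le> sqrt (Re (cosh z) ^ 2 + Im (cosh z) ^ 2)"
    by (intro real_sqrt_le_mono) simp
  then show ?thesis by (simp add: cmod_def)
qed

lemma cosh_nonzero_narrow:
  assumes "\<bar>Im u\<bar> < pi / 2"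
  shows "cosh u \<noteq> (0::complex)"
proof -
  have "0 < cos (Im u)"
    using assms by (intro cos_gt_zero_pi) auto
  then have "0 < cosh (Re u) * \<bar>cos (Im u)\<bar>"
    by simp
  also have "\<dots> \<le> norm (cosh u)"
    by (rule cosh_Re_mult_abs_cos_le_norm_cosh)
  finally show ?thesis by auto
qed

lemma exp_div_4_le_norm_cosh_mult:
  assumes a: "a > 0" and k: "Im k = 0 \<or> Im k = pi / a \<or> 1 / a \<le> \<bar>Re k\<bar>"
  shows "exp (a * \<bar>Re k\<bar>) / 4 \<le> norm (cosh (of_real a * k))"
proof -
  define u where "u = of_real a * k"
  have Re_u: "\<bar>Re u\<bar> = a * \<bar>Re k\<bar>" using a by (simp add: u_def abs_mult)
  consider "Im u = 0 \<or> Im u = pi" | "1 \<le> \<bar>Re u\<bar>"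
    using k a unfolding Re_u by (auto simp: u_def field_simps)
  then have "exp \<bar>Re u\<bar> / 4 \<le> norm (cosh u)"
  proof cases
    case 1
    then have "cosh (Re u) \<le> norm (cosh u)"
      using cosh_Re_mult_abs_cos_le_norm_cosh[of u] by auto
    then show ?thesis using exp_abs_le_2_cosh[of "Re u"] exp_gt_zero[of "\<bar>Re u\<bar>"] by linarith
  next
    case 2
    then show ?thesis
      using exp_abs_le_4_abs_sinh abs_sinh_Re_le_norm_cosh[of u] by fastforce
  qed
  then show ?thesis unfolding Re_u by (simp add: u_def)
qed

lemma cosh_add_pi_i: "cosh (z + \<i> * of_real pi) = - cosh (z :: complex)"
proof -
  have "cosh (\<i> * of_real pi :: complex) = -1" "sinh (\<i> * of_real pi :: complex) = 0"
    by (simp_all add: cosh_field_def sinh_field_def exp_minus)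
  then show ?thesis by (simp add: cosh_add)
qed

lemma cosh_i_pi_half: "cosh (\<i> * of_real (pi / 2)) = (0 :: complex)"
  and sinh_i_pi_half: "sinh (\<i> * of_real (pi / 2)) = (\<i> :: complex)"
proof -
  have "exp (\<i> * of_real (pi / 2)) = \<i>" by (metis cis_conv_exp cis_pi_half)
  then show "cosh (\<i> * of_real (pi / 2)) = (0 :: complex)" "sinh (\<i> * of_real (pi / 2)) = (\<i> :: complex)"
    by (simp_all add: cosh_field_def sinh_field_def exp_minus)
qed

lemma cosh_eq_0_imp_i_pi_half:
  assumes "cosh z = 0" "0 \<le> Im z" "Im z \<le> pi"
  shows "z = \<i> * of_real (pi / 2)"
proof -
  obtain n :: int where n: "\<i> * z = of_real (n * pi) + of_real pi / 2"
    using assms(1) by (auto simp: cosh_conv_cos cos_eq_0)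
  then have re: "Re z = 0" and im: "Im z = - (n * pi + pi / 2)"
    by (auto simp: complex_eq_iff)
  have "pi * (2 * n + 1) \<le> pi * 0" "pi * (- 2) \<le> pi * (2 * n + 1)"
    using assms(2,3) im by (simp_all add: algebra_simps)
  then have "real_of_int (2 * n + 1) \<le> 0" "- 2 \<le> real_of_int (2 * n + 1)"
    by (simp_all only: mult_le_cancel_left_pos[OF pi_gt_zero])
  then have "n = -1" by linarith
  with re im show ?thesis by (simp add: complex_eq_iff)
qed

section \<open>The Fourier transform of sech\<close>

definition exp_div_cosh :: "real \<Rightarrow> real \<Rightarrow> real \<Rightarrow> complex \<Rightarrow> complex" where
  "exp_div_cosh a \<beta> v k = exp (\<i> * of_real v * k + of_real \<beta> * k) / cosh (of_real a * k)"

lemma exp_div_cosh_add_pi_i: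
  assumes "a > 0"
  shows "exp_div_cosh a \<beta> v (z + \<i> * of_real (pi / a)) =
           - exp (of_real (pi / a) * (\<i> * of_real \<beta> - of_real v)) * exp_div_cosh a \<beta> v z"
proof -
  have "of_real a * (z + \<i> * of_real (pi / a)) = of_real a * z + \<i> * of_real pi"
    using assms by (simp add: field_simps)
  moreover have "\<i> * of_real v * (z + \<i> * of_real (pi / a)) + of_real \<beta> * (z + \<i> * of_real (pi / a)) =
      (\<i> * of_real v * z + of_real \<beta> * z) + of_real (pi / a) * (\<i> * of_real \<beta> - of_real v)"
    by (simp add: algebra_simps)
  ultimately show ?thesis
    by (simp add: exp_div_cosh_def cosh_add_pi_i exp_add mult_ac)
qed

lemma rectpath_integral_exp_div_cosh:
  fixes a \<beta> v T :: real
  assumes a: "a > 0" and T: "T > 0"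
  shows "(exp_div_cosh a \<beta> v has_contour_integral
           2 * pi * exp (of_real (pi / (2 * a)) * (\<i> * of_real \<beta> - of_real v)) / a)
         (rectpath (Complex (-T) 0) (Complex T (pi / a)))"
proof -
  define k0 where "k0 = \<i> * of_real (pi / (2 * a))"
  have ak0: "of_real a * k0 = \<i> * of_real (pi / 2)"
    using a by (simp add: k0_def)
  have ck0: "cosh (of_real a * k0) = 0" and sk0: "sinh (of_real a * k0) = \<i>"
    unfolding ak0 by (rule cosh_i_pi_half, rule sinh_i_pi_half)
  have "((\<lambda>k. exp (\<i> * of_real v * k + of_real \<beta> * k) / cosh (of_real a * k)) has_contour_integral
         (2 * pi * \<i> * exp (\<i> * of_real v * k0 + of_real \<beta> * k0) / (of_real a * \<i>)))
        (rectpath (Complex (-T) 0) (Complex T (pi / a)))"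
  proof (rule rectpath_integral_simple_pole)
    show "k0 \<in> box (Complex (-T) 0) (Complex T (pi / a))"
      using T a by (auto simp: k0_def in_box_complex_iff intro!: divide_strict_left_mono)
    show "((\<lambda>k. cosh (of_real a * k)) has_field_derivative of_real a * \<i>) (at k0)"
      by (auto intro!: derivative_eq_intros simp: sk0)
    show "cosh (of_real a * k) \<noteq> 0" if "k \<in> cbox (Complex (-T) 0) (Complex T (pi / a))" "k \<noteq> k0" for k
    proof
      assume "cosh (of_real a * k) = 0"
      then have "of_real a * k = \<i> * of_real (pi / 2)"
        by (rule cosh_eq_0_imp_i_pi_half) (use that a in \<open>auto simp: in_cbox_complex_iff field_simps\<close>)
      then show False using that(2) a by (simp add: k0_def field_simps)
    qed
  qed (use T a ck0 in \<open>auto intro!: holomorphic_intros\<close>)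
  moreover have "\<i> * of_real v * k0 + of_real \<beta> * k0 = of_real (pi / (2 * a)) * (\<i> * of_real \<beta> - of_real v)"
    by (simp add: k0_def algebra_simps del: of_real_divide)
  ultimately show ?thesis using a by (simp add: exp_div_cosh_def[abs_def] mult.assoc)
qed

lemma norm_exp_div_cosh_le:
  fixes a \<beta> v :: real
  assumes a: "a > 0" and k: "0 \<le> Im k" "Im k \<le> pi / a" "Im k = 0 \<or> Im k = pi / a \<or> 1 / a \<le> \<bar>Re k\<bar>"
  shows "norm (exp_div_cosh a \<beta> v k) \<le>
           4 * exp (\<bar>v\<bar> * pi / a) * exp (- (a - \<bar>\<beta>\<bar>) * \<bar>Re k\<bar>)"
proof -
  have "- v * Im k \<le> \<bar>v\<bar> * Im k"
    using k by (intro mult_right_mono) auto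
  also have "\<dots> \<le> \<bar>v\<bar> * pi / a"
    using k mult_left_mono[OF k(2), of "\<bar>v\<bar>"] by simp
  finally have "norm (exp (\<i> * of_real v * k + of_real \<beta> * k)) \<le> exp (\<bar>v\<bar> * pi / a) * exp (\<bar>\<beta>\<bar> * \<bar>Re k\<bar>)"
    using abs_ge_self[of "\<beta> * Re k"] by (simp add: norm_exp_eq_Re abs_mult flip: exp_add)
  then have "norm (exp_div_cosh a \<beta> v k) \<le>
      exp (\<bar>v\<bar> * pi / a) * exp (\<bar>\<beta>\<bar> * \<bar>Re k\<bar>) / (exp (a * \<bar>Re k\<bar>) / 4)"
    unfolding exp_div_cosh_def norm_divide using exp_div_4_le_norm_cosh_mult[OF a k(3)] by (intro frac_le) auto
  also have "\<dots> = 4 * exp (\<bar>v\<bar> * pi / a) * (exp (\<bar>\<beta>\<bar> * \<bar>Re k\<bar>) / exp (a * \<bar>Re k\<bar>))"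
    by simp
  also have "\<dots> = 4 * exp (\<bar>v\<bar> * pi / a) * exp (- (a - \<bar>\<beta>\<bar>) * \<bar>Re k\<bar>)"
    by (simp only: exp_diff[symmetric]) (simp add: algebra_simps)
  finally show ?thesis .
qed

lemma lborel_integral_exp_div_cosh:
  fixes a \<beta> v :: real
  assumes a: "a > 0" and \<beta>: "\<bar>\<beta>\<bar> < a"
  shows "integrable lborel (\<lambda>t. exp_div_cosh a \<beta> v (of_real t))"
    "(LINT t|lborel. exp_div_cosh a \<beta> v (of_real t)) =
       of_real (pi / a) / cosh (of_real (pi / (2 * a)) * (of_real v - \<i> * of_real \<beta>))"
proof -
  define w0 where "w0 = of_real (pi / (2 * a)) * (\<i> * of_real \<beta> - of_real v)"
  define \<Gamma> where "\<Gamma> = {k. 0 \<le> Im k \<and> Im k \<le> pi / a \<and> (Im k = 0 \<or> Im k = pi / a \<or> 1 / a \<le> \<bar>Re k\<bar>)}"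
  have cont: "continuous_on \<Gamma> (exp_div_cosh a \<beta> v)"
    unfolding exp_div_cosh_def[abs_def] using exp_div_4_le_norm_cosh_mult[OF a]
    by (intro continuous_intros) (force simp: \<Gamma>_def)
  have decay: "norm (exp_div_cosh a \<beta> v k) \<le> 4 * exp (\<bar>v\<bar> * pi / a) * exp (- (a - \<bar>\<beta>\<bar>) * \<bar>Re k\<bar>)"
    if "k \<in> \<Gamma>" for k
    using that norm_exp_div_cosh_le[OF a, of k \<beta> v] by (simp add: \<Gamma>_def)
  have rect: "(exp_div_cosh a \<beta> v has_contour_integral 2 * pi * exp w0 / a)
      (rectpath (Complex (-T) 0) (Complex T (pi / a)))" if "1 / a < T" for T
    using rectpath_integral_exp_div_cosh[OF a, of T \<beta> v] that a
    by (simp add: w0_def order_le_less_trans[OF _ that])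
  have "pi / a > 0" "0 < a - \<bar>\<beta>\<bar>" "0 \<le> 1 / a" using a \<beta> by auto
  note lines = lborel_integral_horizontal_lines_diff[OF this cont[unfolded \<Gamma>_def] decay[unfolded \<Gamma>_def] rect]
  have line: "Complex t 0 = of_real t" "Complex t (pi / a) = of_real t + \<i> * of_real (pi / a)" for t
    by (simp_all add: complex_eq_iff)
  show "integrable lborel (\<lambda>t. exp_div_cosh a \<beta> v (of_real t))"
    using lines(1) unfolding line .
  define I where "I = (LINT t|lborel. exp_div_cosh a \<beta> v (of_real t))"
  have "2 * w0 = of_real (pi / a) * (\<i> * of_real \<beta> - of_real v)"
    by (simp add: w0_def)
  then have top: "exp_div_cosh a \<beta> v (Complex t (pi / a)) =
      - exp (2 * w0) * exp_div_cosh a \<beta> v (of_real t)" for t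
    unfolding line(2) exp_div_cosh_add_pi_i[OF a] by simp
  \<comment> \<open>The top side of the rectangle is the integral itself times \<open>- exp (2 * w0)\<close>.\<close>
  have "I * (1 + exp (2 * w0)) = 2 * pi * exp w0 / a"
    using lines(3) by (simp add: line(1) top I_def algebra_simps)
  also have "1 + exp (2 * w0) = 2 * exp w0 * cosh w0"
    by (simp add: cosh_field_def field_simps exp_minus mult_exp_exp)
  finally have "(2 * exp w0) * (I * cosh w0) = (2 * exp w0) * of_real (pi / a)"
    by (simp add: ac_simps)
  then have "I * cosh w0 = of_real (pi / a)"
    by (subst (asm) mult_left_cancel) auto
  moreover have "cosh w0 \<noteq> 0"
  proof (rule cosh_nonzero_narrow)
    have "\<bar>Im w0\<bar> = pi / (2 * a) * \<bar>\<beta>\<bar>" using a by (simp add: w0_def abs_mult)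
    also have "\<dots> < pi / (2 * a) * a" using \<beta> a by (intro mult_strict_left_mono) auto
    finally show "\<bar>Im w0\<bar> < pi / 2" using a by simp
  qed
  ultimately have "I = of_real (pi / a) / cosh w0"
    by (metis nonzero_eq_divide_eq)
  also have "cosh w0 = cosh (of_real (pi / (2 * a)) * (of_real v - \<i> * of_real \<beta>))"
  proof -
    have "- w0 = of_real (pi / (2 * a)) * (of_real v - \<i> * of_real \<beta>)"
      by (simp only: w0_def mult_minus_right[symmetric] minus_diff_eq)
    then show ?thesis by (metis cosh_minus)
  qed
  finally show "I = of_real (pi / a) / cosh (of_real (pi / (2 * a)) * (of_real v - \<i> * of_real \<beta>))" .
qed

section \<open>The sech kernel\<close>

definition sech_kernel :: "real \<Rightarrow> complex \<Rightarrow> complex" where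
  "sech_kernel a z = 1 / (4 * of_real a * cosh (of_real (pi / (2 * a)) * z))"

lemma sech_kernel_add_2ai:
  assumes "a > 0"
  shows "sech_kernel a (z + 2 * \<i> * of_real a) = - sech_kernel a z"
proof -
  have "of_real (pi / (2 * a)) * (z + 2 * \<i> * of_real a) = of_real (pi / (2 * a)) * z + \<i> * of_real pi"
    using assms by (simp add: field_simps)
  then show ?thesis by (simp add: sech_kernel_def cosh_add_pi_i)
qed

lemma norm_sech_kernel:
  "a > 0 \<Longrightarrow> norm (sech_kernel a z) = 1 / (4 * a * norm (cosh (of_real (pi / (2 * a)) * z)))"
  by (simp add: sech_kernel_def norm_divide norm_mult)

lemma cos_pi_mult_div_pos:
  assumes "0 \<le> b" "b < a"
  shows "0 < cos (pi * b / (2 * a))"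
proof (rule cos_gt_zero_pi)
  show "pi * b / (2 * a) < pi / 2"
    using mult_strict_left_mono[of "b / a" 1 "pi / 2"] assms by simp
  show "- (pi / 2) < pi * b / (2 * a)"
    using assms by (intro less_le_trans[OF _ divide_nonneg_pos]) auto
qed

lemma norm_sech_kernel_le_narrow:
  assumes a: "a > 0" and b: "b < a" "\<bar>Im z\<bar> \<le> b"
  shows "norm (sech_kernel a z) \<le> exp (- (pi / (2 * a)) * \<bar>Re z\<bar>) / (2 * a * cos (pi * b / (2 * a)))"
proof -
  define u where "u = of_real (pi / (2 * a)) * z"
  define \<theta> where "\<theta> = pi * b / (2 * a)"
  have Re_u: "\<bar>Re u\<bar> = pi / (2 * a) * \<bar>Re z\<bar>" and Im_u: "\<bar>Im u\<bar> = pi / (2 * a) * \<bar>Im z\<bar>"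
    using a by (simp_all add: u_def abs_mult)
  have "\<bar>Im u\<bar> \<le> \<theta>"
    unfolding Im_u \<theta>_def using mult_left_mono[OF b(2), of "pi / (2 * a)"] a by simp
  moreover have "0 < cos \<theta>"
    unfolding \<theta>_def using b by (intro cos_pi_mult_div_pos) auto
  moreover have "\<theta> \<le> pi"
    using mult_left_mono[of b a pi] a b by (simp add: \<theta>_def field_simps)
  ultimately have cos: "0 < cos \<theta>" "cos \<theta> \<le> \<bar>cos (Im u)\<bar>"
    using cos_monotone_0_pi_le[of "\<bar>Im u\<bar>" \<theta>] cos_abs_real[of "Im u"] by auto
  have "exp \<bar>Re u\<bar> * cos \<theta> \<le> 2 * cosh (Re u) * \<bar>cos (Im u)\<bar>"
    using mult_mono[OF exp_abs_le_2_cosh cos(2)] cos(1) by simp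
  also have "\<dots> \<le> 2 * norm (cosh u)"
    using cosh_Re_mult_abs_cos_le_norm_cosh[of u] by simp
  finally have "norm (sech_kernel a z) \<le> 1 / (4 * a * (exp \<bar>Re u\<bar> * cos \<theta> / 2))"
    unfolding norm_sech_kernel[OF a] u_def[symmetric] using a cos
    by (intro frac_le) (simp_all add: ac_simps)
  also have "\<dots> = exp (- (pi / (2 * a)) * \<bar>Re z\<bar>) / (2 * a * cos \<theta>)"
    by (simp add: Re_u exp_minus field_simps)
  finally show ?thesis unfolding \<theta>_def .
qed

lemma norm_sech_kernel_le_far:
  assumes a: "a > 0" and z: "2 * a / pi \<le> \<bar>Re z\<bar>"
  shows "norm (sech_kernel a z) \<le> exp (- (pi / (2 * a)) * \<bar>Re z\<bar>) / a"
proof -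
  define u where "u = of_real (pi / (2 * a)) * z"
  have Re_u: "\<bar>Re u\<bar> = pi / (2 * a) * \<bar>Re z\<bar>"
    using a by (simp add: u_def abs_mult)
  have "1 \<le> \<bar>Re u\<bar>"
    unfolding Re_u using mult_left_mono[OF z, of "pi / (2 * a)"] a by simp
  then have "exp \<bar>Re u\<bar> / 4 \<le> norm (cosh u)"
    using exp_abs_le_4_abs_sinh abs_sinh_Re_le_norm_cosh[of u] by fastforce
  then have "norm (sech_kernel a z) \<le> 1 / (4 * a * (exp \<bar>Re u\<bar> / 4))"
    unfolding norm_sech_kernel[OF a] u_def[symmetric] using a
    by (intro frac_le) simp_all
  also have "\<dots> = exp (- (pi / (2 * a)) * \<bar>Re z\<bar>) / a"
    by (simp add: Re_u exp_minus field_simps)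
  finally show ?thesis .
qed

lemma holomorphic_on_sech_kernel [holomorphic_intros]:
  assumes "f holomorphic_on A" "a > 0" "\<And>z. z \<in> A \<Longrightarrow> \<bar>Im (f z)\<bar> < a"
  shows "(\<lambda>z. sech_kernel a (f z)) holomorphic_on A"
proof -
  have "cosh (of_real (pi / (2 * a)) * f z) \<noteq> 0" if "z \<in> A" for z
    using assms(2) assms(3)[OF that] by (intro cosh_nonzero_narrow) (simp add: abs_mult field_simps)
  then show ?thesis
    unfolding sech_kernel_def using assms by (intro holomorphic_intros) auto
qed

lemma continuous_on_sech_kernel:
  assumes "a > 0" "\<And>z. z \<in> A \<Longrightarrow> \<bar>Im z\<bar> < a"
  shows "continuous_on A (sech_kernel a)"
  using holomorphic_on_sech_kernel[of "\<lambda>z. z" A a] assms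
  by (auto intro: holomorphic_on_imp_continuous_on)

lemma exp_neg_abs_diff_le:
  fixes \<gamma> v x :: real
  assumes "\<gamma> \<ge> 0"
  shows "exp (- \<gamma> * \<bar>v - x\<bar>) \<le> exp (\<gamma> * \<bar>v\<bar>) * exp (- \<gamma> * \<bar>x\<bar>)"
proof -
  have "\<gamma> * (\<bar>x\<bar> - \<bar>v\<bar>) \<le> \<gamma> * \<bar>v - x\<bar>"
    using assms by (intro mult_left_mono) auto
  then show ?thesis by (simp add: algebra_simps flip: exp_add)
qed

lemma norm_sech_kernel_diff_le:
  assumes a: "a > 0" and b: "b < a" "\<bar>Im (z - w)\<bar> \<le> b"
  shows "norm (sech_kernel a (z - w)) \<le>
    exp (pi / (2 * a) * \<bar>Re z\<bar>) / (2 * a * cos (pi * b / (2 * a))) * exp (- (pi / (2 * a)) * \<bar>Re w\<bar>)"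
proof -
  have "0 < cos (pi * b / (2 * a))"
    using b by (intro cos_pi_mult_div_pos) auto
  then have "exp (- (pi / (2 * a)) * \<bar>Re z - Re w\<bar>) / (2 * a * cos (pi * b / (2 * a))) \<le>
      exp (pi / (2 * a) * \<bar>Re z\<bar>) * exp (- (pi / (2 * a)) * \<bar>Re w\<bar>) / (2 * a * cos (pi * b / (2 * a)))"
    using a exp_neg_abs_diff_le[of "pi / (2 * a)" "Re z" "Re w"] by (intro divide_right_mono) auto
  with norm_sech_kernel_le_narrow[OF a b] show ?thesis by simp
qed

lemma integrable_sech_kernel_mult:
  fixes G :: "real \<Rightarrow> complex"
  assumes a: "a > 0" and z: "\<bar>Im z\<bar> < a"
    and G: "continuous_on UNIV G" "\<And>t. norm (G t) \<le> M"
  shows "integrable lborel (\<lambda>t. sech_kernel a (z - of_real t) * G t)"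
proof (rule integrable_exp_decay)
  define K where "K = exp (pi / (2 * a) * \<bar>Re z\<bar>) / (2 * a * cos (pi * \<bar>Im z\<bar> / (2 * a)))"
  have "continuous_on UNIV (\<lambda>t. sech_kernel a (z - of_real t))"
    by (rule continuous_on_compose2[OF continuous_on_sech_kernel[OF a, of "{w. \<bar>Im w\<bar> < a}"]])
       (use z in \<open>auto intro!: continuous_intros\<close>)
  then show "continuous_on UNIV (\<lambda>t. sech_kernel a (z - of_real t) * G t)"
    using G(1) by (intro continuous_intros)
  show "norm (sech_kernel a (z - of_real t) * G t) \<le> K * M * exp (- (pi / (2 * a)) * \<bar>t\<bar>)" for t
  proof -
    have P: "norm (sech_kernel a (z - of_real t)) \<le> K * exp (- (pi / (2 * a)) * \<bar>t\<bar>)"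
      using norm_sech_kernel_diff_le[of a "\<bar>Im z\<bar>" z "of_real t"] a z by (simp add: K_def)
    have "norm (sech_kernel a (z - of_real t)) * norm (G t) \<le> K * exp (- (pi / (2 * a)) * \<bar>t\<bar>) * M"
      using mult_mono[OF P G(2) order_trans[OF norm_ge_zero P]] by simp
    then show ?thesis by (simp add: norm_mult mult_ac)
  qed
qed (use a in simp)

lemma integrable_sech_kernel_mult_strip:
  fixes \<Lambda> :: "complex \<Rightarrow> complex"
  assumes a: "a > 0" "\<bar>Im z\<bar> < a" and \<Lambda>: "continuous_on (strip w) \<Lambda>"
    and bnd: "\<And>u. u \<in> strip w \<Longrightarrow> norm (\<Lambda> u) \<le> M" and y: "\<bar>y\<bar> \<le> w"
  shows "integrable lborel (\<lambda>t. sech_kernel a (z - of_real t) * \<Lambda> (of_real t + \<i> * of_real y))"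
  by (rule integrable_sech_kernel_mult[OF a continuous_on_strip_line[OF \<Lambda> y], of M], rule bnd)
    (use y in \<open>simp add: strip_def\<close>)

lemma kernel_eq_sech_kernel:
  assumes a: "a > 0" and b: "\<bar>b\<bar> < a"
  shows "kernel a b x = sech_kernel a (of_real x - \<i> * of_real b) + sech_kernel a (of_real x + \<i> * of_real b)"
proof -
  define h where "h \<beta> = exp_div_cosh a \<beta> x" for \<beta>
  note plus = lborel_integral_exp_div_cosh[of a b x, folded h_def]
  note minus = lborel_integral_exp_div_cosh[of a "-b" x, folded h_def]
  have "exp (\<i> * of_real (k * x)) * of_real (cosh (b * k) / cosh (a * k)) =
        (h b (of_real k) + h (-b) (of_real k)) / 2" for k
  proof -
    define E C B where "E = exp (\<i> * of_real x * of_real k)" and "C = cosh (of_real a * of_real k :: complex)"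
      and "B = of_real b * (of_real k :: complex)"
    have "h b (of_real k) = E * exp B / C" "h (-b) (of_real k) = E * exp (- B) / C"
      unfolding h_def exp_div_cosh_def E_def C_def B_def by (simp_all only: of_real_minus mult_minus_left exp_add)
    moreover have "of_real (cosh (b * k) / cosh (a * k)) = (exp B + exp (- B)) / 2 / C"
      unfolding C_def B_def cosh_field_def[symmetric] by (simp flip: cosh_of_real)
    moreover have "exp (\<i> * of_real (k * x)) = E"
      by (simp add: E_def mult_ac)
    ultimately show ?thesis
      by (simp only:) (simp add: add_divide_distrib distrib_left mult.commute)
  qed
  then have "kernel a b x = of_real (1 / (2 * pi)) * (LINT k|lborel. (h b (of_real k) + h (-b) (of_real k)) / 2)"
    unfolding kernel_def by (simp only:)
  also have "\<dots> = of_real (1 / (2 * pi)) * (((LINT k|lborel. h b (of_real k)) + (LINT k|lborel. h (-b) (of_real k))) / 2)"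
    using plus(1) minus(1) a b by simp
  also have "\<dots> = sech_kernel a (of_real x - \<i> * of_real b) + sech_kernel a (of_real x + \<i> * of_real b)"
    using plus(2) minus(2) a b by (simp add: sech_kernel_def field_simps)
  finally show ?thesis .
qed

section \<open>Contour shifts and the Poisson formula\<close>

lemma lborel_integral_sech_kernel_mult_shift:
  fixes \<Lambda> :: "complex \<Rightarrow> complex"
  assumes a: "a > 0" and cd: "c \<le> d"
    and hol: "\<Lambda> holomorphic_on {w. c \<le> Im w \<and> Im w \<le> d}"
    and bnd: "\<And>w. c \<le> Im w \<Longrightarrow> Im w \<le> d \<Longrightarrow> norm (\<Lambda> w) \<le> M"
    and z: "\<bar>Im z - c\<bar> < a" "\<bar>Im z - d\<bar> < a"
  shows "(LINT t|lborel. sech_kernel a (z - Complex t c) * \<Lambda> (Complex t c)) =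
         (LINT t|lborel. sech_kernel a (z - Complex t d) * \<Lambda> (Complex t d))"
proof (cases "c = d")
  case False
  define \<Sigma> where "\<Sigma> = {w. c \<le> Im w \<and> Im w \<le> d}"
  define b where "b = max \<bar>Im z - c\<bar> \<bar>Im z - d\<bar>"
  define K where "K = exp (pi / (2 * a) * \<bar>Re z\<bar>) / (2 * a * cos (pi * b / (2 * a)))"
  define f where "f w = sech_kernel a (z - w) * \<Lambda> w" for w
  have b: "b < a" using z by (simp add: b_def)
  have narrow: "\<bar>Im (z - w)\<bar> \<le> b" if "w \<in> \<Sigma>" for w
    using that by (auto simp: \<Sigma>_def b_def)
  have hol_f: "f holomorphic_on \<Sigma>"
    unfolding f_def using hol a le_less_trans[OF narrow b]
    by (intro holomorphic_intros) (auto simp: \<Sigma>_def)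
  have rect: "(f has_contour_integral 0) (rectpath (Complex (-T) c) (Complex T d))" if "0 < T" for T
  proof (rule Cauchy_theorem_convex_simple)
    have "cbox (Complex (-T) c) (Complex T d) \<subseteq> \<Sigma>"
      by (auto simp: \<Sigma>_def in_cbox_complex_iff)
    then show "f holomorphic_on cbox (Complex (-T) c) (Complex T d)"
      by (rule holomorphic_on_subset[OF hol_f])
    show "path_image (rectpath (Complex (-T) c) (Complex T d)) \<subseteq> cbox (Complex (-T) c) (Complex T d)"
      by (rule path_image_rectpath_subset_cbox) (use that cd in auto)
  qed auto
  define \<Gamma> where "\<Gamma> = {w. c \<le> Im w \<and> Im w \<le> d \<and> (Im w = c \<or> Im w = d \<or> 0 \<le> \<bar>Re w\<bar>)}"
  have "\<Gamma> \<subseteq> \<Sigma>" by (auto simp: \<Gamma>_def \<Sigma>_def)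
  have cont: "continuous_on \<Gamma> f"
    using hol_f \<open>\<Gamma> \<subseteq> \<Sigma>\<close> by (auto intro: holomorphic_on_imp_continuous_on continuous_on_subset)
  have decay: "norm (f w) \<le> K * M * exp (- (pi / (2 * a)) * \<bar>Re w\<bar>)" if "w \<in> \<Gamma>" for w
  proof -
    have w: "w \<in> \<Sigma>" using that \<open>\<Gamma> \<subseteq> \<Sigma>\<close> by auto
    have P: "norm (sech_kernel a (z - w)) \<le> K * exp (- (pi / (2 * a)) * \<bar>Re w\<bar>)"
      using norm_sech_kernel_diff_le[OF a b narrow[OF w]] by (simp add: K_def)
    have "norm (sech_kernel a (z - w)) * norm (\<Lambda> w) \<le> K * exp (- (pi / (2 * a)) * \<bar>Re w\<bar>) * M"
      using mult_mono[OF P bnd order_trans[OF norm_ge_zero P]] w by (simp add: \<Sigma>_def)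
    then show ?thesis by (simp add: f_def norm_mult mult_ac)
  qed
  have "c < d" "0 < pi / (2 * a)" "(0::real) \<le> 0" using cd False a by auto
  from lborel_integral_horizontal_lines_diff(3)[OF this cont[unfolded \<Gamma>_def] decay[unfolded \<Gamma>_def] rect]
  have "(LINT t|lborel. f (Complex t c)) - (LINT t|lborel. f (Complex t d)) = 0" .
  then show ?thesis by (simp add: f_def)
qed simp

lemma sech_kernel_pole_in_strip:
  assumes a: "a > 0" and w: "\<bar>Im w\<bar> \<le> a"
    and zero: "cosh (of_real (pi / (2 * a)) * (of_real v + \<i> * of_real a - w)) = 0"
  shows "w = of_real v"
proof -
  have im: "Im (of_real (pi / (2 * a)) * (of_real v + \<i> * of_real a - w)) = pi / (2 * a) * (a - Im w)"
    by simp
  have "0 \<le> pi / (2 * a) * (a - Im w)" "pi / (2 * a) * (a - Im w) \<le> pi / (2 * a) * (2 * a)"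
    using w a by (intro mult_nonneg_nonneg mult_left_mono; simp)+
  then have "of_real (pi / (2 * a)) * (of_real v + \<i> * of_real a - w) = \<i> * of_real (pi / 2)"
    using a by (intro cosh_eq_0_imp_i_pi_half[OF zero]) (simp_all only: im, simp_all)
  then have "of_real v + \<i> * of_real a - w = \<i> * of_real a"
    using a by (simp add: field_simps)
  then show ?thesis by simp
qed

lemma rectpath_integral_sech_kernel_mult:
  fixes \<Lambda> :: "complex \<Rightarrow> complex"
  assumes a: "a > 0" and T: "\<bar>v\<bar> < T" and hol: "\<Lambda> holomorphic_on strip a"
  shows "((\<lambda>w. sech_kernel a (of_real v + \<i> * of_real a - w) * \<Lambda> w) has_contour_integral - \<Lambda> (of_real v))
           (rectpath (Complex (-T) (-a)) (Complex T a))"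
proof -
  define D where "D w = 4 * of_real a * cosh (of_real (pi / (2 * a)) * (of_real v + \<i> * of_real a - w))" for w
  have arg: "of_real (pi / (2 * a)) * (of_real v + \<i> * of_real a - of_real v) = \<i> * of_real (pi / 2)"
    using a by simp
  have "((\<lambda>w. \<Lambda> w / D w) has_contour_integral (2 * pi * \<i> * \<Lambda> (of_real v) / (- 2 * pi * \<i>)))
          (rectpath (Complex (-T) (-a)) (Complex T a))"
  proof (rule rectpath_integral_simple_pole)
    show "\<Lambda> holomorphic_on cbox (Complex (-T) (-a)) (Complex T a)"
      by (rule holomorphic_on_subset[OF hol]) (auto simp: strip_def in_cbox_complex_iff)
    show "of_real v \<in> box (Complex (-T) (-a)) (Complex T a)"
      using T a by (auto simp: in_box_complex_iff)
    show "D (of_real v) = 0"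
      unfolding D_def arg cosh_i_pi_half by simp
    show "(D has_field_derivative - 2 * pi * \<i>) (at (of_real v))"
    proof -
      have "((\<lambda>w. of_real (pi / (2 * a)) * (of_real v + \<i> * of_real a - w)) has_field_derivative
              - of_real (pi / (2 * a))) (at (of_real v))"
        using a by (auto intro!: derivative_eq_intros)
      from DERIV_cmult[OF has_field_derivative_cosh[OF this], of "4 * of_real a"]
      have "(D has_field_derivative 4 * of_real a * (\<i> * - of_real (pi / (2 * a)))) (at (of_real v))"
        unfolding arg sinh_i_pi_half D_def .
      then show ?thesis by (rule DERIV_cong) (use a in simp)
    qed
    show "D w \<noteq> 0" if "w \<in> cbox (Complex (-T) (-a)) (Complex T a)" "w \<noteq> of_real v" for w
    proof
      assume "D w = 0"
      then have "cosh (of_real (pi / (2 * a)) * (of_real v + \<i> * of_real a - w)) = 0"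
        using a by (simp add: D_def)
      moreover have "\<bar>Im w\<bar> \<le> a" using that(1) by (auto simp: in_cbox_complex_iff)
      ultimately show False using sech_kernel_pole_in_strip[OF a] that(2) by blast
    qed
  qed (use T a in \<open>auto simp: D_def intro!: holomorphic_intros\<close>)
  then show ?thesis
    using a by (simp add: D_def sech_kernel_def mult_ac)
qed

lemma norm_sech_kernel_le_off_pole:
  assumes a: "a > 0"
    and w: "Im w = -a \<or> Im w = a \<or> \<bar>v\<bar> + 2 * a / pi \<le> \<bar>Re w\<bar>"
  shows "norm (sech_kernel a (of_real v + \<i> * of_real a - w)) \<le>
           exp (pi / (2 * a) * \<bar>v\<bar>) / a * exp (- (pi / (2 * a)) * \<bar>Re w\<bar>)"
proof -
  define x where "x = v - Re w"
  have "norm (sech_kernel a (of_real v + \<i> * of_real a - w)) \<le> exp (- (pi / (2 * a)) * \<bar>x\<bar>) / a"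
  proof -
    have "norm (sech_kernel a (of_real x)) \<le> exp (- (pi / (2 * a)) * \<bar>x\<bar>) / (2 * a)"
      using norm_sech_kernel_le_narrow[of a 0 "of_real x"] a by simp
    also have "\<dots> \<le> exp (- (pi / (2 * a)) * \<bar>x\<bar>) / a"
      using a by (intro divide_left_mono) auto
    finally have line: "norm (sech_kernel a (of_real x)) \<le> exp (- (pi / (2 * a)) * \<bar>x\<bar>) / a" .
    consider "Im w = a" | "Im w = -a" | "\<bar>v\<bar> + 2 * a / pi \<le> \<bar>Re w\<bar>" using w by blast
    then show ?thesis
    proof cases
      case 1
      then have "of_real v + \<i> * of_real a - w = of_real x"
        by (simp add: x_def complex_eq_iff)
      then show ?thesis using line by (simp only:)
    next
      case 2
      then have "of_real v + \<i> * of_real a - w = of_real x + 2 * \<i> * of_real a"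
        by (simp add: x_def complex_eq_iff)
      then show ?thesis using line by (simp only: sech_kernel_add_2ai[OF a] norm_minus_cancel)
    next
      case 3
      then have "2 * a / pi \<le> \<bar>Re (of_real v + \<i> * of_real a - w)\<bar>" by simp
      from norm_sech_kernel_le_far[OF a this] show ?thesis by (simp add: x_def)
    qed
  qed
  also have "\<dots> \<le> exp (pi / (2 * a) * \<bar>v\<bar>) * exp (- (pi / (2 * a)) * \<bar>Re w\<bar>) / a"
    using exp_neg_abs_diff_le[of "pi / (2 * a)" v "Re w"] a
    by (intro divide_right_mono) (auto simp: x_def)
  finally show ?thesis by simp
qed

lemma lborel_integral_sech_kernel_mult_boundary:
  fixes \<Lambda> :: "complex \<Rightarrow> complex" and a v :: real
  assumes a: "a > 0" and hol: "\<Lambda> holomorphic_on strip a" and bnd: "\<And>w. w \<in> strip a \<Longrightarrow> norm (\<Lambda> w) \<le> M"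
  defines "f \<equiv> \<lambda>w. sech_kernel a (of_real v + \<i> * of_real a - w) * \<Lambda> w"
  shows "(LINT t|lborel. f (Complex t (-a))) - (LINT t|lborel. f (Complex t a)) = - \<Lambda> (of_real v)"
proof -
  define R where "R = \<bar>v\<bar> + 2 * a / pi"
  define \<Gamma> where "\<Gamma> = {w. -a \<le> Im w \<and> Im w \<le> a \<and> (Im w = -a \<or> Im w = a \<or> R \<le> \<bar>Re w\<bar>)}"
  have R: "0 \<le> R" "\<bar>v\<bar> < R" using a by (auto simp: R_def)
  have \<Gamma>: "w \<in> strip a" "w \<noteq> of_real v" if "w \<in> \<Gamma>" for w
    using that a R by (auto simp: \<Gamma>_def strip_def)
  have nz: "4 * of_real a * cosh (of_real (pi / (2 * a)) * (of_real v + \<i> * of_real a - w)) \<noteq> 0"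
    if "w \<in> \<Gamma>" for w
    using sech_kernel_pole_in_strip[OF a, of w v] \<Gamma>[OF that] a by (auto simp: strip_def)
  have "continuous_on \<Gamma> \<Lambda>"
    using holomorphic_on_imp_continuous_on[OF hol] \<Gamma>(1) by (blast intro: continuous_on_subset)
  then have cont: "continuous_on \<Gamma> f"
    unfolding f_def sech_kernel_def by (intro continuous_intros ballI nz)
  have decay: "norm (f w) \<le> exp (pi / (2 * a) * \<bar>v\<bar>) / a * M * exp (- (pi / (2 * a)) * \<bar>Re w\<bar>)"
    if "w \<in> \<Gamma>" for w
  proof -
    have P: "norm (sech_kernel a (of_real v + \<i> * of_real a - w)) \<le>
               exp (pi / (2 * a) * \<bar>v\<bar>) / a * exp (- (pi / (2 * a)) * \<bar>Re w\<bar>)"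
      using that by (intro norm_sech_kernel_le_off_pole[OF a]) (auto simp: \<Gamma>_def R_def)
    show ?thesis
      using mult_mono[OF P bnd[OF \<Gamma>(1)[OF that]] order_trans[OF norm_ge_zero P]]
      by (simp add: f_def norm_mult mult_ac)
  qed
  have rect: "(f has_contour_integral - \<Lambda> (of_real v)) (rectpath (Complex (-T) (-a)) (Complex T a))"
    if "R < T" for T
    unfolding f_def using rectpath_integral_sech_kernel_mult[OF a _ hol] that R by simp
  have "-a < a" "0 < pi / (2 * a)" using a by auto
  from lborel_integral_horizontal_lines_diff(3)[OF this R(1) cont[unfolded \<Gamma>_def] decay[unfolded \<Gamma>_def] rect]
  show ?thesis .
qed

lemma sech_kernel_poisson_formula:
  fixes \<Lambda> :: "complex \<Rightarrow> complex"
  assumes a: "a > 0" and hol: "\<Lambda> holomorphic_on strip a" and bnd: "\<And>w. w \<in> strip a \<Longrightarrow> norm (\<Lambda> w) \<le> M"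
  shows "integrable lborel (\<lambda>t. sech_kernel a (of_real v - of_real t) *
           (\<Lambda> (of_real t - \<i> * of_real a) + \<Lambda> (of_real t + \<i> * of_real a)))"
    and "(LINT t|lborel. sech_kernel a (of_real v - of_real t) *
           (\<Lambda> (of_real t - \<i> * of_real a) + \<Lambda> (of_real t + \<i> * of_real a))) = \<Lambda> (of_real v)"
proof -
  have int: "integrable lborel (\<lambda>t. sech_kernel a (of_real v - of_real t) * \<Lambda> (of_real t + \<i> * of_real y))"
    if "\<bar>y\<bar> \<le> a" for y
    using that a by (intro integrable_sech_kernel_mult_strip[OF a _ holomorphic_on_imp_continuous_on[OF hol] bnd]) auto
  then show "integrable lborel (\<lambda>t. sech_kernel a (of_real v - of_real t) *
           (\<Lambda> (of_real t - \<i> * of_real a) + \<Lambda> (of_real t + \<i> * of_real a)))"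
    using Bochner_Integration.integrable_add[OF int[of "-a"] int[of a]] a by (simp add: distrib_left)
  have "of_real v + \<i> * of_real a - Complex t (-a) = (of_real v - of_real t) + 2 * \<i> * of_real a"
    "of_real v + \<i> * of_real a - Complex t a = of_real v - of_real t"
    "Complex t (-a) = of_real t - \<i> * of_real a" "Complex t a = of_real t + \<i> * of_real a" for t
    by (simp_all add: complex_eq_iff)
  with lborel_integral_sech_kernel_mult_boundary[OF a hol bnd, of v]
  have "(LINT t|lborel. - (sech_kernel a (of_real v - of_real t) * \<Lambda> (of_real t - \<i> * of_real a))) -
        (LINT t|lborel. sech_kernel a (of_real v - of_real t) * \<Lambda> (of_real t + \<i> * of_real a)) = - \<Lambda> (of_real v)"
    by (simp only: sech_kernel_add_2ai[OF a] mult_minus_left)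
  then show "(LINT t|lborel. sech_kernel a (of_real v - of_real t) *
           (\<Lambda> (of_real t - \<i> * of_real a) + \<Lambda> (of_real t + \<i> * of_real a))) = \<Lambda> (of_real v)"
    using int[of "-a"] int[of a] a by (simp add: distrib_left algebra_simps)
qed

lemma lborel_integral_kernel_mult:
  fixes \<Lambda> :: "complex \<Rightarrow> complex"
  assumes a: "a > 0" and b: "0 \<le> b" "b < a"
    and hol: "\<Lambda> holomorphic_on strip b" and bnd: "\<And>u. u \<in> strip b \<Longrightarrow> norm (\<Lambda> u) \<le> M"
  shows "integrable lborel (\<lambda>t. kernel a b (v - t) * \<Lambda> (of_real t))"
    and "integrable lborel (\<lambda>t. sech_kernel a (of_real v - of_real t) *
           (\<Lambda> (of_real t - \<i> * of_real b) + \<Lambda> (of_real t + \<i> * of_real b)))"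
    and "(LINT t|lborel. kernel a b (v - t) * \<Lambda> (of_real t)) =
         (LINT t|lborel. sech_kernel a (of_real v - of_real t) *
                           (\<Lambda> (of_real t - \<i> * of_real b) + \<Lambda> (of_real t + \<i> * of_real b)))"
proof -
  have int: "integrable lborel (\<lambda>t. sech_kernel a (of_real v + \<i> * of_real s - of_real t) *
      \<Lambda> (of_real t + \<i> * of_real y))" if "\<bar>s\<bar> \<le> b" "\<bar>y\<bar> \<le> b" for s y
    using that b
    by (intro integrable_sech_kernel_mult_strip[OF a(1) _ holomorphic_on_imp_continuous_on[OF hol] bnd]) auto
  show "integrable lborel (\<lambda>t. kernel a b (v - t) * \<Lambda> (of_real t))"
    using Bochner_Integration.integrable_add[OF int[of "-b" 0] int[of b 0]] kernel_eq_sech_kernel[of a b] a b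
    by (simp add: algebra_simps)
  show "integrable lborel (\<lambda>t. sech_kernel a (of_real v - of_real t) *
           (\<Lambda> (of_real t - \<i> * of_real b) + \<Lambda> (of_real t + \<i> * of_real b)))"
    using Bochner_Integration.integrable_add[OF int[of 0 "-b"] int[of 0 b]] b by (simp add: distrib_left)
  have hol': "\<Lambda> holomorphic_on {u. c \<le> Im u \<and> Im u \<le> d}" if "-b \<le> c" "d \<le> b" for c d
    by (rule holomorphic_on_subset[OF hol]) (use that in \<open>auto simp: strip_def\<close>)
  have bnd': "norm (\<Lambda> u) \<le> M" if "-b \<le> c" "d \<le> b" "c \<le> Im u" "Im u \<le> d" for c d u
    using that by (intro bnd) (auto simp: strip_def)
  have "(LINT t|lborel. sech_kernel a (of_real v - \<i> * of_real b - Complex t (-b)) * \<Lambda> (Complex t (-b))) =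
        (LINT t|lborel. sech_kernel a (of_real v - \<i> * of_real b - Complex t 0) * \<Lambda> (Complex t 0))"
    by (rule lborel_integral_sech_kernel_mult_shift[OF a _ hol' bnd']) (use a b in auto)
  moreover have "(LINT t|lborel. sech_kernel a (of_real v + \<i> * of_real b - Complex t 0) * \<Lambda> (Complex t 0)) =
        (LINT t|lborel. sech_kernel a (of_real v + \<i> * of_real b - Complex t b) * \<Lambda> (Complex t b))"
    by (rule lborel_integral_sech_kernel_mult_shift[OF a _ hol' bnd']) (use a b in auto)
  ultimately show "(LINT t|lborel. kernel a b (v - t) * \<Lambda> (of_real t)) =
         (LINT t|lborel. sech_kernel a (of_real v - of_real t) *
                           (\<Lambda> (of_real t - \<i> * of_real b) + \<Lambda> (of_real t + \<i> * of_real b)))"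
    using kernel_eq_sech_kernel[of a b] a b int[of "-b" 0] int[of b 0] int[of 0 "-b"] int[of 0 b]
    by (simp add: Complex_eq algebra_simps)
qed

lemma kernel_representation_of_strip_equation:
  fixes \<Lambda>0 :: "complex \<Rightarrow> complex" and \<Lambda> :: "'j \<Rightarrow> complex \<Rightarrow> complex" and b :: "'j \<Rightarrow> real"
  assumes a: "a > 0" and J: "finite J" and b: "\<And>j. j \<in> J \<Longrightarrow> 0 \<le> b j \<and> b j < a"
    and hol0: "\<Lambda>0 holomorphic_on strip a" and bnd0: "bounded (\<Lambda>0 ` strip a)"
    and hol: "\<And>j. j \<in> J \<Longrightarrow> \<Lambda> j holomorphic_on strip (b j)"
    and bnd: "\<And>j. j \<in> J \<Longrightarrow> bounded (\<Lambda> j ` strip (b j))"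
    and eq: "\<And>t. \<Lambda>0 (of_real t - \<i> * of_real a) + \<Lambda>0 (of_real t + \<i> * of_real a) =
               (\<Sum>j\<in>J. \<Lambda> j (of_real t - \<i> * of_real (b j)) + \<Lambda> j (of_real t + \<i> * of_real (b j))) + D"
  shows "\<And>j. j \<in> J \<Longrightarrow> integrable lborel (\<lambda>t. kernel a (b j) (v - t) * \<Lambda> j (of_real t))"
    and "\<Lambda>0 (of_real v) = (\<Sum>j\<in>J. LINT t|lborel. kernel a (b j) (v - t) * \<Lambda> j (of_real t)) + D / 2"
proof -
  obtain M0 where M0: "\<And>u. u \<in> strip a \<Longrightarrow> norm (\<Lambda>0 u) \<le> M0"
    using bnd0 unfolding bounded_iff by blast
  have "\<forall>j\<in>J. \<exists>m. \<forall>u\<in>strip (b j). norm (\<Lambda> j u) \<le> m"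
    using bnd unfolding bounded_iff by blast
  then obtain M where M: "\<And>j u. j \<in> J \<Longrightarrow> u \<in> strip (b j) \<Longrightarrow> norm (\<Lambda> j u) \<le> M j"
    by (metis bchoice)
  note kernel_mult = lborel_integral_kernel_mult[OF a _ _ hol M]
  show "integrable lborel (\<lambda>t. kernel a (b j) (v - t) * \<Lambda> j (of_real t))" if "j \<in> J" for j
    using kernel_mult(1) b that by blast
  define P where "P t = sech_kernel a (of_real v - of_real t)" for t
  define S where "S j t = \<Lambda> j (of_real t - \<i> * of_real (b j)) + \<Lambda> j (of_real t + \<i> * of_real (b j))" for j t
  \<comment> \<open>The Poisson formula is applied to \<open>\<Lambda>0 - D / 2\<close>, which absorbs the constant.\<close>
  have "(\<lambda>z. \<Lambda>0 z - D / 2) holomorphic_on strip a"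
    by (intro holomorphic_intros hol0)
  moreover have "norm (\<Lambda>0 z - D / 2) \<le> M0 + norm (D / 2)" if "z \<in> strip a" for z
    using M0[OF that] norm_triangle_ineq4[of "\<Lambda>0 z" "D / 2"] by linarith
  ultimately have poisson: "(LINT t|lborel. P t * ((\<Lambda>0 (of_real t - \<i> * of_real a) - D / 2) +
      (\<Lambda>0 (of_real t + \<i> * of_real a) - D / 2))) = \<Lambda>0 (of_real v) - D / 2"
    unfolding P_def by (rule sech_kernel_poisson_formula(2)[OF a])
  have "(\<Sum>j\<in>J. LINT t|lborel. kernel a (b j) (v - t) * \<Lambda> j (of_real t)) = (\<Sum>j\<in>J. LINT t|lborel. P t * S j t)"
    using kernel_mult(3) b by (simp add: P_def S_def)
  also have "\<dots> = (LINT t|lborel. P t * (\<Sum>j\<in>J. S j t))"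
    using kernel_mult(2) b by (simp add: P_def S_def sum_distrib_left)
  also have "\<dots> = (LINT t|lborel. P t * ((\<Lambda>0 (of_real t - \<i> * of_real a) - D / 2) +
      (\<Lambda>0 (of_real t + \<i> * of_real a) - D / 2)))"
    unfolding S_def by (simp add: eq)
  finally show "\<Lambda>0 (of_real v) = (\<Sum>j\<in>J. LINT t|lborel. kernel a (b j) (v - t) * \<Lambda> j (of_real t)) + D / 2"
    using poisson by simp
qed

section \<open>Logarithms\<close>

lemma continuous_logs_differ_by_constant:
  fixes f g :: "'a::topological_space \<Rightarrow> complex"
  assumes S: "connected S" and f: "continuous_on S f" and g: "continuous_on S g"
    and exps: "\<And>z. z \<in> S \<Longrightarrow> exp (f z) = exp (g z)"
  shows "\<exists>c. \<forall>z\<in>S. f z = g z + c"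
proof -
  have "(\<lambda>z. f z - g z) constant_on S"
  proof (rule continuous_discrete_range_constant[OF S])
    show "continuous_on S (\<lambda>z. f z - g z)" using f g by (intro continuous_intros)
    fix x assume x: "x \<in> S"
    show "\<exists>e>0. \<forall>y. y \<in> S \<and> f y - g y \<noteq> f x - g x \<longrightarrow> e \<le> norm ((f y - g y) - (f x - g x))"
    proof (intro exI[of _ "2 * pi"] conjI allI impI)
      fix y assume y: "y \<in> S \<and> f y - g y \<noteq> f x - g x"
      have "exp (f y - g y) = exp (f x - g x)"
        using exps[of x] exps[of y] x y by (simp add: exp_diff)
      then obtain n :: int where n: "f y - g y = f x - g x + of_int (2 * n) * of_real pi * \<i>"
        by (auto simp: exp_eq)
      with y have "1 \<le> \<bar>real_of_int n\<bar>" by auto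
      then show "2 * pi \<le> norm ((f y - g y) - (f x - g x))"
        using n by (simp add: norm_mult)
    qed simp
  qed
  then show ?thesis
    by (auto simp: constant_on_def algebra_simps)
qed

lemma norm_Ln_le_near_1:
  assumes "norm (u - 1) < 1 / 2"
  shows "norm (Ln u) \<le> 1 + pi"
proof -
  have u0: "u \<noteq> 0" using assms by auto
  have "1 / 2 < norm u" "norm u < 2"
    using assms norm_triangle_ineq2[of u 1] norm_triangle_ineq3[of u 1]
    by (auto simp: norm_minus_commute)
  then have "ln (norm u) < ln 2" "ln (1 / 2) < ln (norm u)"
    using u0 by simp_all
  then have "\<bar>ln (norm u)\<bar> \<le> ln 2"
    by (simp add: ln_div)
  moreover have "ln (2::real) \<le> 1" using ln_le_minus_one[of 2] by simp
  moreover have "\<bar>Im (Ln u)\<bar> \<le> pi" using mpi_less_Im_Ln[OF u0] Im_Ln_le_pi[OF u0] by auto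
  ultimately show ?thesis using cmod_le[of "Ln u"] u0 by simp
qed

lemma bounded_continuous_log_near_constant:
  fixes \<Lambda> g :: "complex \<Rightarrow> complex"
  assumes H: "connected H" and \<Lambda>: "continuous_on H \<Lambda>" and g: "continuous_on H g"
    and log: "\<And>z. z \<in> H \<Longrightarrow> exp (\<Lambda> z) = g z" and c: "c \<noteq> 0"
    and near: "\<And>z. z \<in> H \<Longrightarrow> norm (g z - c) < norm c / 2"
  shows "bounded (\<Lambda> ` H)"
proof -
  have near_1: "norm (g z / c - 1) < 1 / 2" if "z \<in> H" for z
  proof -
    have "g z / c - 1 = (g z - c) / c"
      using c by (simp add: field_simps)
    then have "norm (g z / c - 1) = norm (g z - c) / norm c"
      by (simp add: norm_divide)
    also have "\<dots> < (norm c / 2) / norm c"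
      using near[OF that] c by (intro divide_strict_right_mono) auto
    finally show ?thesis using c by simp
  qed
  have "g z / c \<notin> \<real>\<^sub>\<le>\<^sub>0" if "z \<in> H" for z
    using near_1[OF that] abs_Re_le_cmod[of "g z / c - 1"] by (auto simp: complex_nonpos_Reals_iff)
  then have cont: "continuous_on H (\<lambda>z. Ln c + Ln (g z / c))"
    using g c by (intro continuous_intros) auto
  have exps: "exp (\<Lambda> z) = exp (Ln c + Ln (g z / c))" if "z \<in> H" for z
  proof -
    have "g z \<noteq> 0" using log[OF that] by (metis exp_not_eq_zero)
    then show ?thesis using log[OF that] c by (simp add: exp_add)
  qed
  from continuous_logs_differ_by_constant[OF H \<Lambda> cont exps]
  obtain k where k: "\<And>z. z \<in> H \<Longrightarrow> \<Lambda> z = Ln c + Ln (g z / c) + k"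
    by blast
  have "norm (\<Lambda> z) \<le> norm (Ln c) + (1 + pi) + norm k" if "z \<in> H" for z
  proof -
    have "norm (\<Lambda> z) \<le> norm (Ln c) + norm (Ln (g z / c)) + norm k"
      unfolding k[OF that] by (rule order_trans[OF norm_triangle_ineq add_right_mono[OF norm_triangle_ineq]])
    then show ?thesis using norm_Ln_le_near_1[OF near_1[OF that]] by linarith
  qed
  then show ?thesis unfolding bounded_iff by blast
qed

lemma ANZC_near_limits:
  assumes "ANZC g w"
  obtains c1 c2 R where "c1 \<noteq> 0" "c2 \<noteq> 0"
    "\<And>z. z \<in> strip w \<Longrightarrow> R \<le> Re z \<Longrightarrow> norm (g z - c1) < norm c1 / 2"
    "\<And>z. z \<in> strip w \<Longrightarrow> Re z \<le> -R \<Longrightarrow> norm (g z - c2) < norm c2 / 2"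
proof -
  obtain c1 c2 where c: "c1 \<noteq> 0" "c2 \<noteq> 0"
    and lim1: "(g \<longlongrightarrow> c1) (inf (filtercomap Re at_top) (principal (strip w)))"
    and lim2: "(g \<longlongrightarrow> c2) (inf (filtercomap Re at_bot) (principal (strip w)))"
    using assms unfolding ANZC_def by blast
  have "\<forall>\<^sub>F z in inf (filtercomap Re at_top) (principal (strip w)). dist (g z) c1 < norm c1 / 2"
    using c(1) by (intro tendstoD[OF lim1]) simp
  then obtain R1 where R1: "\<And>z. z \<in> strip w \<Longrightarrow> R1 \<le> Re z \<Longrightarrow> norm (g z - c1) < norm c1 / 2"
    unfolding eventually_inf_principal eventually_filtercomap eventually_at_top_linorder
    by (auto simp: dist_norm)
  have "\<forall>\<^sub>F z in inf (filtercomap Re at_bot) (principal (strip w)). dist (g z) c2 < norm c2 / 2"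
    using c(2) by (intro tendstoD[OF lim2]) simp
  then obtain R2 where R2: "\<And>z. z \<in> strip w \<Longrightarrow> Re z \<le> R2 \<Longrightarrow> norm (g z - c2) < norm c2 / 2"
    unfolding eventually_inf_principal eventually_filtercomap eventually_at_bot_linorder
    by (auto simp: dist_norm)
  show ?thesis
    by (rule that[of c1 c2 "max R1 (- R2)"]) (use c R1 R2 in auto)
qed

lemma bounded_log_ANZC:
  fixes \<Lambda> g :: "complex \<Rightarrow> complex"
  assumes anzc: "ANZC g w" and \<Lambda>: "continuous_on (strip w) \<Lambda>"
    and log: "\<And>z. z \<in> strip w \<Longrightarrow> exp (\<Lambda> z) = g z"
  shows "bounded (\<Lambda> ` strip w)"
proof -
  obtain c1 c2 R where c: "c1 \<noteq> 0" "c2 \<noteq> 0"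
    and near1: "\<And>z. z \<in> strip w \<Longrightarrow> R \<le> Re z \<Longrightarrow> norm (g z - c1) < norm c1 / 2"
    and near2: "\<And>z. z \<in> strip w \<Longrightarrow> Re z \<le> -R \<Longrightarrow> norm (g z - c2) < norm c2 / 2"
    using ANZC_near_limits[OF anzc] by metis
  have "g holomorphic_on strip w"
    using anzc unfolding ANZC_def by (simp add: analytic_imp_holomorphic)
  then have g: "continuous_on (strip w) g"
    by (rule holomorphic_on_imp_continuous_on)
  define H1 H2 K where "H1 = strip w \<inter> {z. R \<le> Re z}" and "H2 = strip w \<inter> {z. Re z \<le> -R}"
    and "K = cbox (Complex (-R) (-w)) (Complex R w)"
  have "connected H1" "connected H2"
    unfolding H1_def H2_def
    by (intro convex_connected convex_Int convex_strip convex_halfspace_Re_ge convex_halfspace_Re_le)+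
  have "bounded (\<Lambda> ` H1)"
  proof (rule bounded_continuous_log_near_constant[OF \<open>connected H1\<close> _ _ _ c(1)])
    show "continuous_on H1 \<Lambda>" "continuous_on H1 g"
      by (rule continuous_on_subset[OF \<Lambda>] continuous_on_subset[OF g], simp add: H1_def)+
  qed (use log near1 in \<open>auto simp: H1_def\<close>)
  moreover have "bounded (\<Lambda> ` H2)"
  proof (rule bounded_continuous_log_near_constant[OF \<open>connected H2\<close> _ _ _ c(2)])
    show "continuous_on H2 \<Lambda>" "continuous_on H2 g"
      by (rule continuous_on_subset[OF \<Lambda>] continuous_on_subset[OF g], simp add: H2_def)+
  qed (use log near2 in \<open>auto simp: H2_def\<close>)
  moreover have "bounded (\<Lambda> ` K)"
  proof (intro compact_imp_bounded compact_continuous_image)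
    show "continuous_on K \<Lambda>"
      by (rule continuous_on_subset[OF \<Lambda>]) (auto simp: K_def strip_def in_cbox_complex_iff)
  qed (simp add: K_def)
  moreover have "strip w \<subseteq> H1 \<union> H2 \<union> K"
    by (auto simp: H1_def H2_def K_def strip_def in_cbox_complex_iff)
  then have "\<Lambda> ` strip w \<subseteq> \<Lambda> ` H1 \<union> \<Lambda> ` H2 \<union> \<Lambda> ` K"
    by blast
  ultimately show ?thesis
    by (metis bounded_Un bounded_subset)
qed

lemma ANZC_holomorphic_log:
  fixes g :: "complex \<Rightarrow> complex" and L :: "real \<Rightarrow> complex"
  assumes anzc: "ANZC g w" and w: "w \<ge> 0" and L: "continuous_on UNIV L"
    and log_L: "\<And>t. exp (L t) = g (of_real t)"
  shows "\<exists>\<Lambda>. \<Lambda> holomorphic_on strip w \<and> bounded (\<Lambda> ` strip w) \<and>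
           (\<forall>z\<in>strip w. exp (\<Lambda> z) = g z) \<and> (\<forall>t. \<Lambda> (of_real t) = L t)"
proof -
  have hol_g: "g holomorphic_on strip w" and nz: "\<And>z. z \<in> strip w \<Longrightarrow> g z \<noteq> 0"
    using anzc unfolding ANZC_def by (simp_all add: analytic_imp_holomorphic)
  from contractible_imp_holomorphic_log[OF hol_g convex_imp_contractible[OF convex_strip] nz]
  obtain \<Lambda>0 where hol: "\<Lambda>0 holomorphic_on strip w" and log0: "\<And>z. z \<in> strip w \<Longrightarrow> g z = exp (\<Lambda>0 z)"
    by blast
  have real: "of_real t \<in> strip w" for t using w by (simp add: strip_def)
  have cont: "continuous_on UNIV (\<lambda>t. \<Lambda>0 (of_real t))"
    using continuous_on_strip_line[OF holomorphic_on_imp_continuous_on[OF hol], of 0] w by simp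
  have exps: "exp (\<Lambda>0 (of_real t)) = exp (L t)" if "t \<in> UNIV" for t
    by (simp only: log_L log0[OF real])
  from continuous_logs_differ_by_constant[OF connected_UNIV cont L exps]
  obtain k where k: "\<And>t. \<Lambda>0 (of_real t) = L t + k"
    by blast
  have "exp (L 0) * exp k = exp (L 0)"
    by (metis exp_add k log0[OF real] log_L)
  then have "exp k = 1" by simp
  then have log: "exp (\<Lambda>0 z - k) = g z" if "z \<in> strip w" for z
    using log0[OF that] by (simp add: exp_diff)
  have "(\<lambda>z. \<Lambda>0 z - k) holomorphic_on strip w"
    by (intro holomorphic_intros hol)
  moreover from bounded_log_ANZC[OF anzc holomorphic_on_imp_continuous_on[OF this] log]
  have "bounded ((\<lambda>z. \<Lambda>0 z - k) ` strip w)" .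
  ultimately show ?thesis
    using log k by (intro exI[of _ "\<lambda>z. \<Lambda>0 z - k"]) auto
qed

lemma log_product_equation:
  fixes \<Lambda>0 g0 :: "complex \<Rightarrow> complex" and \<Lambda> g :: "'j \<Rightarrow> complex \<Rightarrow> complex" and b w :: "'j \<Rightarrow> real"
  assumes J: "finite J"
    and prod: "\<And>t. g0 (of_real t - \<i> * of_real a) * g0 (of_real t + \<i> * of_real a) =
      (\<Prod>j\<in>J. g j (of_real t - \<i> * of_real (b j)) * g j (of_real t + \<i> * of_real (b j)))"
    and a: "\<bar>a\<bar> \<le> w0" and cont0: "continuous_on (strip w0) \<Lambda>0"
    and log0: "\<And>z. z \<in> strip w0 \<Longrightarrow> exp (\<Lambda>0 z) = g0 z"
    and b: "\<And>j. j \<in> J \<Longrightarrow> \<bar>b j\<bar> \<le> w j" and cont: "\<And>j. j \<in> J \<Longrightarrow> continuous_on (strip (w j)) (\<Lambda> j)"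
    and log: "\<And>j z. j \<in> J \<Longrightarrow> z \<in> strip (w j) \<Longrightarrow> exp (\<Lambda> j z) = g j z"
  shows "\<exists>D. \<forall>t. \<Lambda>0 (of_real t - \<i> * of_real a) + \<Lambda>0 (of_real t + \<i> * of_real a) =
      (\<Sum>j\<in>J. \<Lambda> j (of_real t - \<i> * of_real (b j)) + \<Lambda> j (of_real t + \<i> * of_real (b j))) + D"
proof -
  have line: "of_real t + \<i> * of_real y \<in> strip x" "of_real t - \<i> * of_real y \<in> strip x"
    if "\<bar>y\<bar> \<le> x" for t x y
    using that by (auto simp: strip_def)
  have cont_line: "continuous_on UNIV (\<lambda>t. f (of_real t - \<i> * of_real y) + f (of_real t + \<i> * of_real y))"
    if "continuous_on (strip x) f" "\<bar>y\<bar> \<le> x" for f :: "complex \<Rightarrow> complex" and x y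
  proof -
    have "continuous_on UNIV (\<lambda>t. f (of_real t - \<i> * of_real y))"
      using continuous_on_strip_line[OF that(1), of "-y"] that(2) by simp
    then show ?thesis
      using continuous_on_strip_line[OF that] by (intro continuous_on_add)
  qed
  have "continuous_on UNIV (\<lambda>t. \<Lambda>0 (of_real t - \<i> * of_real a) + \<Lambda>0 (of_real t + \<i> * of_real a))"
    by (rule cont_line[OF cont0 a])
  moreover have "continuous_on UNIV
      (\<lambda>t. \<Sum>j\<in>J. \<Lambda> j (of_real t - \<i> * of_real (b j)) + \<Lambda> j (of_real t + \<i> * of_real (b j)))"
    by (intro continuous_on_sum cont_line[OF cont b])
  moreover have "exp (\<Lambda>0 (of_real t - \<i> * of_real a) + \<Lambda>0 (of_real t + \<i> * of_real a)) =
      exp (\<Sum>j\<in>J. \<Lambda> j (of_real t - \<i> * of_real (b j)) + \<Lambda> j (of_real t + \<i> * of_real (b j)))" for t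
  proof -
    have "exp (\<Sum>j\<in>J. \<Lambda> j (of_real t - \<i> * of_real (b j)) + \<Lambda> j (of_real t + \<i> * of_real (b j))) =
        (\<Prod>j\<in>J. g j (of_real t - \<i> * of_real (b j)) * g j (of_real t + \<i> * of_real (b j)))"
      unfolding exp_sum[OF J] using line b log by (intro prod.cong) (simp_all add: exp_add)
    then show ?thesis
      using prod[of t] line a log0 by (simp add: exp_add)
  qed
  ultimately show ?thesis
    using continuous_logs_differ_by_constant[OF connected_UNIV] by blast
qed

theorem lemma1:
  fixes M :: nat
    and vv :: "nat \<Rightarrow> real"
    and w :: "nat \<Rightarrow> real"
    and g :: "nat \<Rightarrow> complex \<Rightarrow> complex"
    and L :: "nat \<Rightarrow> real \<Rightarrow> complex"
  assumes M: "M \<ge> 1"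
    and nonneg: "\<And>j. j \<le> M \<Longrightarrow> vv j \<ge> 0"
    and dom: "\<And>j. 1 \<le> j \<Longrightarrow> j \<le> M \<Longrightarrow> vv 0 > vv j"
    and Yeq: "\<And>v::real. g 0 (complex_of_real v - \<i> * complex_of_real (vv 0)) *
                          g 0 (complex_of_real v + \<i> * complex_of_real (vv 0)) =
                        (\<Prod>j=1..M. g j (complex_of_real v - \<i> * complex_of_real (vv j)) *
                                   g j (complex_of_real v + \<i> * complex_of_real (vv j)))"
    and w_pos: "\<And>j. j \<le> M \<Longrightarrow> w j > 0"
    and w_ge: "\<And>j. j \<le> M \<Longrightarrow> w j \<ge> vv j"
    and anzc: "\<And>j. j \<le> M \<Longrightarrow> ANZC (g j) (w j)"
    and L_cont: "\<And>j. j \<le> M \<Longrightarrow> continuous_on UNIV (L j)"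
    and L_log: "\<And>j v. j \<le> M \<Longrightarrow> exp (L j v) = g j (complex_of_real v)"
  shows "\<exists>C::complex.
           (\<forall>v::real. \<forall>j\<in>{1..M}.
              integrable lborel (\<lambda>v'. kernel (vv 0) (vv j) (v - v') * L j v')) \<and>
           (\<forall>v::real. L 0 v =
              (\<Sum>j=1..M. integral\<^sup>L lborel (\<lambda>v'. kernel (vv 0) (vv j) (v - v') * L j v')) + C)"
proof -
  have a: "vv 0 > 0" using dom[of 1] nonneg[of 1] M by simp
  have "\<forall>j\<in>{..M}. \<exists>\<Lambda>. \<Lambda> holomorphic_on strip (w j) \<and> bounded (\<Lambda> ` strip (w j)) \<and>
          (\<forall>z\<in>strip (w j). exp (\<Lambda> z) = g j z) \<and> (\<forall>t. \<Lambda> (of_real t) = L j t)"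
    using ANZC_holomorphic_log anzc w_pos L_cont L_log by (simp add: less_imp_le)
  from bchoice[OF this] obtain \<Lambda> where \<Lambda>: "\<forall>j\<in>{..M}. \<Lambda> j holomorphic_on strip (w j) \<and>
      bounded (\<Lambda> j ` strip (w j)) \<and> (\<forall>z\<in>strip (w j). exp (\<Lambda> j z) = g j z) \<and> (\<forall>t. \<Lambda> j (of_real t) = L j t)"
    by blast
  then have restrict: "\<Lambda> j holomorphic_on strip (vv j) \<and> bounded (\<Lambda> j ` strip (vv j))" if "j \<le> M" for j
    using strip_mono[OF w_ge[OF that]] that by (meson atMost_iff bounded_subset holomorphic_on_subset image_mono)
  obtain D where D: "\<And>t. \<Lambda> 0 (of_real t - \<i> * of_real (vv 0)) + \<Lambda> 0 (of_real t + \<i> * of_real (vv 0)) =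
      (\<Sum>j=1..M. \<Lambda> j (of_real t - \<i> * of_real (vv j)) + \<Lambda> j (of_real t + \<i> * of_real (vv j))) + D"
    using log_product_equation[of "{1..M}" "g 0" "vv 0" g vv "w 0" "\<Lambda> 0" w \<Lambda>] Yeq nonneg w_ge \<Lambda>
    by (force intro: holomorphic_on_imp_continuous_on)
  have vv: "0 \<le> vv j \<and> vv j < vv 0" if "j \<in> {1..M}" for j
    using nonneg dom that by auto
  note formula = kernel_representation_of_strip_equation[OF a finite_atLeastAtMost vv _ _ _ _ D]
  show ?thesis
  proof (intro exI[of _ "D / 2"] conjI allI ballI)
    show "integrable lborel (\<lambda>t. kernel (vv 0) (vv j) (v - t) * L j t)" if "j \<in> {1..M}" for v j
      using formula(1)[of j v] restrict \<Lambda> that by simp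
    show "L 0 v = (\<Sum>j=1..M. LINT t|lborel. kernel (vv 0) (vv j) (v - t) * L j t) + D / 2" for v
      using formula(2)[of v] restrict \<Lambda> by simp
  qed
qed

end
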